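(* In the setting below, the minimizer $\theta_n^*=(\rho_n^*,\lambda_n^* )$ of the population dual loss $L_n(\cdot\,;\sigma^2,B)$ over $\Theta(\ell)$ satisfies, as $n\to\infty$, $$\|\lambda_{n,-1}^*\|_2=O\big(\lambda_{n,1}^*\ell^3+n^{-1}\big).$$ Consequently, for fixed $\delta,\epsilon\in(0,1)$, if $\hat B\ge \varepsilon_0>0$, there is a constant $C$ depending only on $\delta$, $B$ and $\varepsilon_0$ such that $$\sup_{\theta\,\in\,\Theta_n(\ell,\delta,\epsilon)} \big|L_n(\theta;\hat\sigma^2,\hat B)-L_n(\theta;\hat\sigma^2, B)\big|\le C\, \frac{(\lambda_{n,1}^* )^2}{n}\Big|\frac{1}{\hat B}-\frac{1}{B}\Big|,$$ where here $\theta_n^*=\theta_n^*(\hat\sigma^2,B)$ is used in the definition of $\Theta_n(\ell,\delta,\epsilon)$.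
   Context: Regression discontinuity setting with cutoff normalized to $c=0$: i.i.d. pairs $(X_i,Y_i)$, $W_i=\mathbf{1}\{X_i\ge 0\}$, the running variable has a strictly positive density at $0$; only observations with $|X_i|\le\ell$ are used, and $(X,W)$ denotes a generic draw of a retained running variable and its treatment indicator. For $\lambda=(\lambda_1,\dots,\lambda_6)$ write $\lambda_{-1}=(\lambda_2,\dots,\lambda_6)$. Dual parameter space: $\Theta(\ell)=\{(f,\lambda): f:[-\ell,\ell]\to\mathbb{R},\ f(0)=f'(0)=f''(0)=0,\ f''\text{ is }\lambda_1\text{-Lipschitz},\ \lambda\in[0,\infty)\times\mathbb{R}^5\}$. For $\theta=(\rho,\lambda)$ let $G(\theta;x,w)=\rho(x)+\lambda_2 w+\lambda_3(1-w)+\lambda_4 wx+\lambda_5(1-w)x+\lambda_6x^2$. Population dual loss: $L_n(\theta;\sigma^2,B)=\frac{1}{4\sigma^2}\mathbb{E}[G^2(\theta;X,W)]+\frac{\lambda_1^2}{4nB^2}+\frac{\lambda_2-\lambda_3}{n}$, with minimizer $\theta_n^*(\sigma^2,B)=(\rho_n^*,\lambda_n^* )$ over $\Theta(\ell)$. $\hat\sigma^2>0$, $\hat B>0$ are estimates computed independently of the sample and $B>0$ is a fixed constant. Neighborhood: $\Theta_n(\ell,\delta,\epsilon)=\{(\rho,\lambda)\in\Theta(\ell): |\lambda_1-\lambda^*_{n,1}|\le\delta\lambda^*_{n,1},\ \|\lambda_{-1}-\lambda^*_{n,-1}\|_2\le\epsilon\|\lambda^*_{n,-1}\|_2\}$.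 *)

theory Defs
  imports "HOL-Probability.Probability"
begin

text \<open>Parameters theta = (rho, lambda); lambda is a function nat => real whose
  components 1..6 are lambda_1..lambda_6 (all other components are required to be 0).
  The function rho : [-l,l] -> R is represented as a total function that vanishes
  outside [-l,l].\<close>

type_synonym dual_param = "(real \<Rightarrow> real) \<times> (nat \<Rightarrow> real)"

definition treat :: "real \<Rightarrow> real" where
  "treat x = (if x \<ge> 0 then 1 else 0)"

definition Theta :: "real \<Rightarrow> dual_param set" where
  "Theta l = {(f, lam).
     (\<forall>x. \<bar>x\<bar> > l \<longrightarrow> f x = 0) \<and>
     (\<exists>f1 f2.
        (\<forall>x\<in>{-l..l}. (f has_real_derivative f1 x) (at x within {-l..l}) \<and>
                      (f1 has_real_derivative f2 x) (at x within {-l..l})) \<and>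
        f 0 = 0 \<and> f1 0 = 0 \<and> f2 0 = 0 \<and>
        (lam 1)-lipschitz_on {-l..l} f2) \<and>
     lam 1 \<ge> 0 \<and> (\<forall>i. i \<notin> {1..6} \<longrightarrow> lam i = 0)}"

definition Gfun :: "dual_param \<Rightarrow> real \<Rightarrow> real \<Rightarrow> real" where
  "Gfun \<theta> x w = fst \<theta> x + snd \<theta> 2 * w + snd \<theta> 3 * (1 - w) + snd \<theta> 4 * w * x
      + snd \<theta> 5 * (1 - w) * x + snd \<theta> 6 * x\<^sup>2"

text \<open>Population dual loss L_n(theta; sigma^2, B); M is the law of a retained running variable.\<close>
definition dual_loss :: "real measure \<Rightarrow> nat \<Rightarrow> real \<Rightarrow> real \<Rightarrow> dual_param \<Rightarrow> real" where
  "dual_loss M n s2 B \<theta> =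
     (1 / (4 * s2)) * (\<integral>x. (Gfun \<theta> x (treat x))\<^sup>2 \<partial>M)
     + (snd \<theta> 1)\<^sup>2 / (4 * real n * B\<^sup>2) + (snd \<theta> 2 - snd \<theta> 3) / real n"

definition norm_rest :: "(nat \<Rightarrow> real) \<Rightarrow> real" where
  "norm_rest lam = sqrt (\<Sum>i\<in>{2..6}. (lam i)\<^sup>2)"

definition Theta_n :: "real \<Rightarrow> real \<Rightarrow> real \<Rightarrow> (nat \<Rightarrow> real) \<Rightarrow> dual_param set" where
  "Theta_n l \<delta> \<epsilon> lamstar = {(f, lam) \<in> Theta l.
      \<bar>lam 1 - lamstar 1\<bar> \<le> \<delta> * lamstar 1 \<and>
      norm_rest (\<lambda>i. lam i - lamstar i) \<le> \<epsilon> * norm_rest lamstar}"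

definition rd_design :: "real \<Rightarrow> (real \<Rightarrow> real) \<Rightarrow> bool" where
  "rd_design l p \<longleftrightarrow> l > 0 \<and> p \<in> borel_measurable borel \<and> (\<forall>x. p x \<ge> 0) \<and>
     (\<forall>x. \<bar>x\<bar> > l \<longrightarrow> p x = 0) \<and> prob_space (density lborel p) \<and>
     isCont p 0 \<and> p 0 > 0"

definition is_minimizer :: "real measure \<Rightarrow> real \<Rightarrow> nat \<Rightarrow> real \<Rightarrow> real \<Rightarrow> dual_param \<Rightarrow> bool" where
  "is_minimizer M l n s2 B \<theta> \<longleftrightarrow> \<theta> \<in> Theta l \<and> (\<forall>\<theta>'\<in>Theta l. dual_loss M n s2 B \<theta> \<le> dual_loss M n s2 B \<theta>')"

end

theory Submission
  imports Defs
begin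

text \<open>Comparing the minimiser with the same parameter with \<open>\<lambda>\<^sub>2, \<dots>, \<lambda>\<^sub>6\<close> set to zero
  (which stays in \<open>\<Theta>(\<ell>)\<close>) shows \<open>\<integral> h\<^sup>2 \<le> 2 \<bar>\<integral> \<rho> h\<bar> + 4 \<sigma>\<^sup>2 \<bar>\<lambda>\<^sub>2 - \<lambda>\<^sub>3\<bar> / n\<close>, where
  \<open>h\<close> is the piecewise quadratic part of \<open>G\<close>. Since \<open>\<rho>\<close> and its first two derivatives
  vanish at 0 and \<open>\<rho>''\<close> is \<open>\<lambda>\<^sub>1\<close>-Lipschitz, \<open>\<bar>\<rho>\<bar> \<le> \<lambda>\<^sub>1 \<ell>\<^sup>3\<close>, so the right-hand side is
  \<open>O((\<lambda>\<^sub>1 \<ell>\<^sup>3 + 1/n) \<parallel>\<lambda>\<^sub>-\<^sub>1\<parallel>)\<close>. Conversely, the density is bounded below near the cutoff,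
  and a quadratic polynomial on a short interval has \<open>L\<^sup>2\<close>-norm comparable to its
  coefficient vector, so \<open>\<integral> h\<^sup>2 \<ge> c \<parallel>\<lambda>\<^sub>-\<^sub>1\<parallel>\<^sup>2\<close>. The second claim is elementary: only the
  penalty \<open>\<lambda>\<^sub>1\<^sup>2 / (4 n B\<^sup>2)\<close> depends on \<open>B\<close>, and on \<open>\<Theta>\<^sub>n\<close> we have \<open>\<lambda>\<^sub>1 \<le> 2 \<lambda>\<^sup>*\<^sub>n\<^sub>,\<^sub>1\<close>.\<close>

lemma Theta_fst_abs_le:
  assumes th: "(f, lam) \<in> Theta l" and l: "l > 0"
  shows "\<bar>f x\<bar> \<le> lam 1 * l ^ 3"
proof -
  from th obtain f1 f2 where
    d: "\<forall>x\<in>{-l..l}. (f has_real_derivative f1 x) (at x within {-l..l}) \<and>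
                      (f1 has_real_derivative f2 x) (at x within {-l..l})"
    and z: "f 0 = 0" "f1 0 = 0" "f2 0 = 0" and lip: "(lam 1)-lipschitz_on {-l..l} f2"
    and out: "\<forall>x. \<bar>x\<bar> > l \<longrightarrow> f x = 0" and lp: "lam 1 \<ge> 0"
    unfolding Theta_def by auto
  have z0: "0 \<in> {-l..l}" using l by auto
  have f2_le: "\<bar>f2 y\<bar> \<le> lam 1 * l" if "y \<in> {-l..l}" for y
  proof -
    have "dist (f2 y) (f2 0) \<le> lam 1 * dist y 0" by (rule lipschitz_onD[OF lip that z0])
    also have "\<dots> \<le> lam 1 * l" using that lp by (intro mult_left_mono) (auto simp: dist_real_def)
    finally show ?thesis using z by (simp add: dist_real_def)
  qed
  have f1_le: "\<bar>f1 y\<bar> \<le> lam 1 * l * l" if "y \<in> {-l..l}" for y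
  proof -
    have "norm (f1 y - f1 0) \<le> (lam 1 * l) * norm (y - 0)"
      by (rule field_differentiable_bound[where S="{-l..l}" and f'=f2])
         (use d f2_le that z0 in auto)
    also have "\<dots> \<le> lam 1 * l * l" using that lp l by (intro mult_left_mono) auto
    finally show ?thesis using z by simp
  qed
  show ?thesis
  proof (cases "x \<in> {-l..l}")
    case True
    have "norm (f x - f 0) \<le> (lam 1 * l * l) * norm (x - 0)"
      by (rule field_differentiable_bound[where S="{-l..l}" and f'=f1])
         (use d f1_le True z0 in auto)
    also have "\<dots> \<le> lam 1 * l * l * l" using True lp l by (intro mult_left_mono) auto
    finally show ?thesis using z by (simp add: power3_eq_cube)
  next
    case False
    then have "f x = 0" using out by auto
    then show ?thesis using lp l by simp
  qed
qed

lemma Theta_snd_1_nonneg: "\<theta> \<in> Theta l \<Longrightarrow> 0 \<le> snd \<theta> 1"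
  unfolding Theta_def by auto

lemma Theta_fst_measurable:
  assumes th: "(f, lam) \<in> Theta l"
  shows "f \<in> borel_measurable borel"
proof -
  from th obtain f1 where
    d: "\<forall>x\<in>{-l..l}. (f has_real_derivative f1 x) (at x within {-l..l})"
    and out: "\<forall>x. \<bar>x\<bar> > l \<longrightarrow> f x = 0"
    unfolding Theta_def by auto
  have "continuous_on {-l..l} f"
    using d by (auto simp: continuous_on_eq_continuous_within intro: DERIV_continuous)
  then have "(\<lambda>x. indicator {-l..l} x *\<^sub>R f x) \<in> borel_measurable borel"
    by (intro borel_measurable_continuous_on_indicator) auto
  moreover have "(\<lambda>x. indicator {-l..l} x *\<^sub>R f x) = f"
  proof
    fix x show "indicator {-l..l} x *\<^sub>R f x = f x"
      by (cases "\<bar>x\<bar> \<le> l") (use out in \<open>auto simp: indicator_def abs_le_iff\<close>)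
  qed
  ultimately show ?thesis by simp
qed

definition sq_quadratic_primitive :: "real \<Rightarrow> real \<Rightarrow> real \<Rightarrow> real \<Rightarrow> real" where
  "sq_quadratic_primitive a b c x =
     a^2*x + a*b*x^2 + (b^2+2*a*c)*x^3/3 + b*c*x^4/2 + c^2*x^5/5"

lemma sq_quadratic_primitive_deriv:
  "(sq_quadratic_primitive a b c has_real_derivative (a + b*x + c*x^2)^2) (at x within S)"
  unfolding sq_quadratic_primitive_def
  by (rule derivative_eq_intros refl | simp)+
     (simp add: power2_eq_square eval_nat_numeral algebra_simps)

text \<open>The right-hand side is \<open>\<integral>\<^sub>0\<^sup>1 (a + b x + c x\<^sup>2)\<^sup>2 dx\<close>, the quadratic form of the
  \<open>3\<times>3\<close> Hilbert matrix, whose smallest eigenvalue exceeds \<open>1/400\<close>; the identity below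
  is its \<open>LDL\<^sup>T\<close> decomposition after subtracting \<open>1/400\<close>.\<close>
lemma hilbert3_quadratic_form_ge:
  fixes a b c :: real
  shows "(a^2 + b^2 + c^2) / 400 \<le> a^2 + a*b + (b^2 + 2*a*c)/3 + b*c/2 + c^2/5"
proof -
  have "a^2 + a*b + (b^2 + 2*a*c)/3 + b*c/2 + c^2/5 - (a^2 + b^2 + c^2) / 400
    = 399/400 * (a + 200/399*b + 400/1197*c)^2 + 4267/53200 * (b + 39700/38403*c)^2
      + 54533/138250800 * c^2"
    by (simp add: power2_eq_square field_simps)
  moreover have "0 \<le> 399/400 * (a + 200/399*b + 400/1197*c)^2
      + 4267/53200 * (b + 39700/38403*c)^2 + 54533/138250800 * c^2" by simp
  ultimately show ?thesis by linarith
qed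

lemma sq_quadratic_primitive_ge:
  fixes a b c r :: real
  assumes "0 < r" "r \<le> 1"
  shows "r^5/400 * (a^2 + b^2 + c^2) \<le> sq_quadratic_primitive a b c r"
proof -
  have scaled: "sq_quadratic_primitive a b c r =
      r * (a^2 + a*(b*r) + ((b*r)^2 + 2*a*(c*r^2))/3 + (b*r)*(c*r^2)/2 + (c*r^2)^2/5)"
    unfolding sq_quadratic_primitive_def
    by (simp add: power2_eq_square field_simps) (simp add: algebra_simps eval_nat_numeral)
  have "r^4 * (a^2 + b^2 + c^2) \<le> a^2 + (b*r)^2 + (c*r^2)^2"
  proof -
    have "r^4*a^2 \<le> a^2" using assms by (simp add: mult_left_le_one_le power_le_one)
    moreover have "r^4*b^2 \<le> (b*r)^2"
      using mult_left_mono[OF power_decreasing[of 2 4 r], of "b^2"] assms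
      by (simp add: power_mult_distrib mult.commute)
    moreover have "r^4*c^2 = (c*r^2)^2" by (simp add: power_mult_distrib power_mult[symmetric])
    ultimately show ?thesis by (simp add: algebra_simps)
  qed
  then have "r * (r^4 * (a^2 + b^2 + c^2)) / 400 \<le> r * (a^2 + (b*r)^2 + (c*r^2)^2) / 400"
    using assms by (intro divide_right_mono mult_left_mono) auto
  then have "r^5/400 * (a^2 + b^2 + c^2) \<le> r * ((a^2 + (b*r)^2 + (c*r^2)^2)/400)"
    by (simp add: eval_nat_numeral)
  also have "\<dots> \<le> sq_quadratic_primitive a b c r"
    unfolding scaled using assms hilbert3_quadratic_form_ge[of a "b*r" "c*r^2"]
    by (simp add: mult_left_mono)
  finally show ?thesis .
qed

lemma integral_sq_quadratic_right:
  assumes "0 \<le> r"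
  shows "(\<integral>x. indicator {0..r} x *\<^sub>R (a + b*x + c*x^2)^2 \<partial>lborel) = sq_quadratic_primitive a b c r"
proof -
  have "(\<integral>x. indicator {0..r} x *\<^sub>R (a + b*x + c*x^2)^2 \<partial>lborel)
      = sq_quadratic_primitive a b c r - sq_quadratic_primitive a b c 0"
    by (rule integral_FTC_atLeastAtMost[OF assms])
       (auto simp: has_real_derivative_iff_has_vector_derivative[symmetric]
          sq_quadratic_primitive_deriv intro!: continuous_intros)
  then show ?thesis by (simp add: sq_quadratic_primitive_def)
qed

lemma integral_sq_quadratic_left:
  assumes "0 \<le> r"
  shows "(\<integral>x. indicator {-r..0} x *\<^sub>R (a + b*x + c*x^2)^2 \<partial>lborel) = sq_quadratic_primitive a (-b) c r"
proof -
  have "(\<integral>x. indicator {-r..0} x *\<^sub>R (a + b*x + c*x^2)^2 \<partial>lborel)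
      = sq_quadratic_primitive a b c 0 - sq_quadratic_primitive a b c (-r)"
    by (rule integral_FTC_atLeastAtMost)
       (use assms in \<open>auto simp: has_real_derivative_iff_has_vector_derivative[symmetric]
          sq_quadratic_primitive_deriv intro!: continuous_intros\<close>)
  then show ?thesis by (simp add: sq_quadratic_primitive_def eval_nat_numeral)
qed

lemma integrable_sq_quadratic_interval:
  "integrable lborel (\<lambda>x. indicator {u..v} x *\<^sub>R ((a::real) + b*x + c*x^2)^2)"
  using borel_integrable_atLeastAtMost[of u v "\<lambda>x. (a + b*x + c*x^2)^2"]
  by (simp add: mult.commute)

definition quadratic_part :: "(nat \<Rightarrow> real) \<Rightarrow> real \<Rightarrow> real" where
  "quadratic_part lam x = lam 2 * treat x + lam 3 * (1 - treat x) + lam 4 * treat x * x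
      + lam 5 * (1 - treat x) * x + lam 6 * x\<^sup>2"

lemma Gfun_treat_eq: "Gfun (f, lam) x (treat x) = f x + quadratic_part lam x"
  by (simp add: Gfun_def quadratic_part_def)

lemma treat_measurable[measurable]: "treat \<in> borel_measurable borel"
proof -
  have "treat = (\<lambda>x. if x \<ge> 0 then 1 else 0)" by (simp add: treat_def fun_eq_iff)
  moreover have "(\<lambda>x::real. if x \<ge> 0 then 1 else (0::real)) \<in> borel_measurable borel"
    by measurable
  ultimately show ?thesis by simp
qed

lemma quadratic_part_measurable[measurable]: "quadratic_part lam \<in> borel_measurable borel"
  unfolding quadratic_part_def by measurable

lemma quadratic_part_nonneg: "x \<ge> 0 \<Longrightarrow> quadratic_part lam x = lam 2 + lam 4 * x + lam 6 * x^2"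
  by (simp add: quadratic_part_def treat_def)

lemma quadratic_part_neg: "x < 0 \<Longrightarrow> quadratic_part lam x = lam 3 + lam 5 * x + lam 6 * x^2"
  by (simp add: quadratic_part_def treat_def)

lemma norm_rest_nonneg: "0 \<le> norm_rest lam"
  unfolding norm_rest_def by (simp add: sum_nonneg)

lemma norm_rest_sq: "(norm_rest lam)\<^sup>2 = (\<Sum>i\<in>{2..6}. (lam i)\<^sup>2)"
  unfolding norm_rest_def by (simp add: sum_nonneg)

lemma abs_le_norm_rest:
  assumes "i \<in> {2..6}"
  shows "\<bar>lam i\<bar> \<le> norm_rest lam"
proof -
  have "(lam i)\<^sup>2 \<le> (\<Sum>j\<in>{2..6}. (lam j)\<^sup>2)"
    using assms by (intro member_le_sum) auto
  then show ?thesis unfolding norm_rest_def using real_sqrt_le_mono by fastforce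
qed

lemma quadratic_part_abs_le:
  assumes "\<bar>x\<bar> \<le> l"
  shows "\<bar>quadratic_part lam x\<bar> \<le> 5 * (1 + l + l^2) * norm_rest lam"
proof -
  define R where "R = norm_rest lam"
  have R: "\<bar>lam i\<bar> \<le> R" if "i \<in> {2..6}" for i using abs_le_norm_rest[OF that] by (simp add: R_def)
  have R0: "0 \<le> R" using R[of 2] by simp
  have lin: "\<bar>lam i * x\<bar> \<le> R * l" if "i \<in> {2..6}" for i
    using R[OF that] assms by (simp add: abs_mult mult_mono)
  have "x^2 \<le> l^2" using assms by (metis abs_ge_zero power2_abs power_mono)
  then have sq: "\<bar>lam 6 * x^2\<bar> \<le> R * l^2"
    using R[of 6] by (simp add: abs_mult mult_mono)
  have "\<bar>quadratic_part lam x\<bar> \<le> R + R * l + R * l^2"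
  proof (cases "x \<ge> 0")
    case True
    then show ?thesis using R[of 2] lin[of 4] sq by (simp add: quadratic_part_nonneg)
  next
    case False
    then show ?thesis using R[of 3] lin[of 5] sq by (simp add: quadratic_part_neg)
  qed
  also have "\<dots> \<le> 5 * (1 + l + l^2) * R" using R0 assms by (simp add: algebra_simps)
  finally show ?thesis by (simp add: R_def)
qed

lemma rd_design_bounded_integral:
  fixes g :: "real \<Rightarrow> real"
  assumes rd: "rd_design l p" and g[measurable]: "g \<in> borel_measurable borel"
    and bound: "\<And>x. \<bar>x\<bar> \<le> l \<Longrightarrow> \<bar>g x\<bar> \<le> K"
  shows "integrable (density lborel p) g" "\<bar>\<integral>x. g x \<partial>density lborel p\<bar> \<le> K"
proof -
  interpret prob_space "density lborel p" using rd by (simp add: rd_design_def)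
  have [measurable]: "p \<in> borel_measurable borel" using rd by (simp add: rd_design_def)
  have "\<bar>x\<bar> \<le> l" if "0 < ennreal (p x)" for x
  proof (rule ccontr)
    assume "\<not> \<bar>x\<bar> \<le> l"
    then have "p x = 0" using rd by (simp add: rd_design_def)
    then show False using that by simp
  qed
  then have ae: "AE x in density lborel p. \<bar>g x\<bar> \<le> K"
    by (subst AE_density) (auto intro!: AE_I2 bound)
  show int: "integrable (density lborel p) g"
    using ae by (intro integrable_const_bound[where B=K]) auto
  have "\<bar>\<integral>x. g x \<partial>density lborel p\<bar> \<le> (\<integral>x. \<bar>g x\<bar> \<partial>density lborel p)" by simp
  also have "\<dots> \<le> K" using int ae by (intro integral_le_const) auto
  finally show "\<bar>\<integral>x. g x \<partial>density lborel p\<bar> \<le> K" .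
qed

lemma rd_design_integrable_square:
  fixes g :: "real \<Rightarrow> real"
  assumes rd: "rd_design l p" and g: "g \<in> borel_measurable borel"
    and bound: "\<And>x. \<bar>x\<bar> \<le> l \<Longrightarrow> \<bar>g x\<bar> \<le> K"
  shows "integrable (density lborel p) (\<lambda>x. (g x)\<^sup>2)"
proof (rule rd_design_bounded_integral(1)[OF rd, where K="K\<^sup>2"])
  fix x :: real assume "\<bar>x\<bar> \<le> l"
  then have "\<bar>g x\<bar>\<^sup>2 \<le> K\<^sup>2" using bound by (intro power_mono) auto
  then show "\<bar>(g x)\<^sup>2\<bar> \<le> K\<^sup>2" by simp
qed (use g in simp)

lemma quadratic_part_energy_ge:
  fixes p :: "real \<Rightarrow> real"
  assumes p[measurable]: "p \<in> borel_measurable borel" and p_nonneg: "\<And>x. p x \<ge> 0"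
    and int: "integrable (density lborel p) (\<lambda>x. (quadratic_part lam x)\<^sup>2)"
    and r: "0 < r" "r \<le> 1" and q: "0 \<le> q" and q_le: "\<And>x. \<bar>x\<bar> \<le> r \<Longrightarrow> q \<le> p x"
  shows "q * (r^5/400) * (norm_rest lam)\<^sup>2
           \<le> (\<integral>x. (quadratic_part lam x)\<^sup>2 \<partial>density lborel p)"
proof -
  define h where "h = quadratic_part lam"
  define P where "P = sq_quadratic_primitive (lam 2) (lam 4) (lam 6) r"
  define N where "N = sq_quadratic_primitive (lam 3) (- lam 5) (lam 6) r"
  define g where "g x = q * (indicator {0..r} x *\<^sub>R (lam 2 + lam 4 * x + lam 6 * x^2)^2
        + indicator {-r..0} x *\<^sub>R (lam 3 + lam 5 * x + lam 6 * x^2)^2)" for x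
  have g_le_ae: "AE x in lborel. g x \<le> p x * (h x)^2"
    using AE_lborel_singleton[of "0::real"]
  proof eventually_elim
    case (elim x)
    then consider "0 < x" "x \<le> r" | "-r \<le> x" "x < 0" | "r < \<bar>x\<bar>" by fastforce
    then show ?case
    proof cases
      case 1
      then show ?thesis using q_le[of x]
        by (simp add: g_def h_def quadratic_part_nonneg mult_right_mono)
    next
      case 2
      then show ?thesis using q_le[of x]
        by (simp add: g_def h_def quadratic_part_neg mult_right_mono)
    next
      case 3
      then have "g x = 0" by (auto simp: g_def indicator_def)
      then show ?thesis using p_nonneg[of x] by simp
    qed
  qed
  have "integrable lborel (\<lambda>x. p x * (h x)^2)"
    using int unfolding h_def by (subst (asm) integrable_density) (auto simp: p_nonneg)
  then have "(\<integral>x. g x \<partial>lborel) \<le> (\<integral>x. p x * (h x)^2 \<partial>lborel)"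
    by (rule integral_mono_AE'[OF _ g_le_ae]) (simp add: p_nonneg)
  also have "\<dots> = (\<integral>x. (h x)\<^sup>2 \<partial>density lborel p)"
    by (subst integral_density) (auto simp: p_nonneg h_def)
  finally have g_le: "(\<integral>x. g x \<partial>lborel) \<le> (\<integral>x. (h x)\<^sup>2 \<partial>density lborel p)" .
  have g_eq: "(\<integral>x. g x \<partial>lborel) = q * (P + N)"
    unfolding g_def P_def N_def using r
    by (simp only: integral_mult_right_zero integral_sq_quadratic_right integral_sq_quadratic_left
        Bochner_Integration.integral_add[OF integrable_sq_quadratic_interval
          integrable_sq_quadratic_interval] less_imp_le)
  have "r^5/400 * (norm_rest lam)\<^sup>2 \<le> P + N"
  proof -
    have "r^5/400 * (lam 2^2 + lam 4^2 + lam 6^2) \<le> P"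
      "r^5/400 * (lam 3^2 + (- lam 5)^2 + lam 6^2) \<le> N"
      unfolding P_def N_def using sq_quadratic_primitive_ge r by blast+
    moreover have "r^5/400 * (norm_rest lam)\<^sup>2 \<le> r^5/400 * (lam 2^2 + lam 4^2 + lam 6^2)
        + r^5/400 * (lam 3^2 + (- lam 5)^2 + lam 6^2)"
      unfolding norm_rest_sq using r
      by (simp add: eval_nat_numeral atLeastAtMostSuc_conv algebra_simps)
    ultimately show ?thesis by linarith
  qed
  then have "q * (r^5/400) * (norm_rest lam)\<^sup>2 \<le> q * (P + N)"
    using q by (simp add: mult.assoc mult_left_mono)
  then show ?thesis using g_le unfolding g_eq h_def by linarith
qed

lemma minimizer_quadratic_part_energy_le:
  fixes p :: "real \<Rightarrow> real"
  assumes rd: "rd_design l p" and s2: "s2 > 0" and n: "n \<ge> 1"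
    and mn: "is_minimizer (density lborel p) l n s2 B (f, lam)"
  shows "(\<integral>x. (quadratic_part lam x)\<^sup>2 \<partial>density lborel p)
           \<le> (10 * (1 + l + l^2) * (lam 1 * l^3) + 8 * s2 / real n) * norm_rest lam"
proof -
  define M where "M = density lborel p"
  define h where "h = quadratic_part lam"
  define R where "R = norm_rest lam"
  define E where "E = 1 + l + l^2"
  define F where "F = lam 1 * l^3"
  have l: "l > 0" using rd by (simp add: rd_design_def)
  have th: "(f, lam) \<in> Theta l" and min: "\<And>\<theta>. \<theta> \<in> Theta l \<Longrightarrow> dual_loss M n s2 B (f, lam) \<le> dual_loss M n s2 B \<theta>"
    using mn unfolding is_minimizer_def M_def by auto
  have f_meas: "f \<in> borel_measurable borel" by (rule Theta_fst_measurable[OF th])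
  have h_meas: "h \<in> borel_measurable borel" unfolding h_def by (rule quadratic_part_measurable)
  have f_le: "\<bar>f x\<bar> \<le> F" for x unfolding F_def by (rule Theta_fst_abs_le[OF th l])
  have h_le: "\<bar>h x\<bar> \<le> 5 * E * R" if "\<bar>x\<bar> \<le> l" for x
    unfolding h_def E_def R_def by (rule quadratic_part_abs_le[OF that])
  have R0: "0 \<le> R" and F0: "0 \<le> F" using f_le[of 0] norm_rest_nonneg by (auto simp: R_def)
  have int_ff: "integrable M (\<lambda>x. (f x)\<^sup>2)"
    unfolding M_def using rd_design_integrable_square[OF rd f_meas f_le] .
  have "\<bar>f x * h x\<bar> \<le> F * (5 * E * R)" if "\<bar>x\<bar> \<le> l" for x
    unfolding abs_mult using f_le h_le[OF that] F0 by (intro mult_mono) auto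
  note fh_bound = rd_design_bounded_integral[OF rd borel_measurable_times[OF f_meas h_meas] this]
  have int_fh: "integrable M (\<lambda>x. f x * h x)"
    and fh_le: "\<bar>\<integral>x. f x * h x \<partial>M\<bar> \<le> F * (5 * E * R)"
    using fh_bound unfolding M_def by simp_all
  have int_hh: "integrable M (\<lambda>x. (h x)\<^sup>2)"
    unfolding M_def using rd_design_integrable_square[OF rd h_meas h_le] .
  define X where "X = (\<integral>x. (f x)\<^sup>2 \<partial>M)"
  define Y where "Y = (\<integral>x. f x * h x \<partial>M)"
  define Z where "Z = (\<integral>x. (h x)\<^sup>2 \<partial>M)"
  have "(\<integral>x. (f x + h x)\<^sup>2 \<partial>M) = (\<integral>x. (f x)\<^sup>2 + (2 * (f x * h x) + (h x)\<^sup>2) \<partial>M)"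
    by (rule Bochner_Integration.integral_cong) (auto simp: power2_eq_square algebra_simps)
  also have "\<dots> = X + 2 * Y + Z"
    using int_ff int_fh int_hh unfolding X_def Y_def Z_def by simp
  finally have expand: "(\<integral>x. (f x + h x)\<^sup>2 \<partial>M) = X + 2 * Y + Z" .
  define d where "d = (lam 2 - lam 3) / real n"
  define lam0 where "lam0 = (\<lambda>i. if i = (1::nat) then lam 1 else 0)"
  have "(f, lam0) \<in> Theta l" using th unfolding Theta_def lam0_def by auto
  then have "dual_loss M n s2 B (f, lam) \<le> dual_loss M n s2 B (f, lam0)" by (rule min)
  moreover have "dual_loss M n s2 B (f, lam) = (X + 2 * Y + Z) / (4 * s2) + (lam 1)\<^sup>2 / (4 * real n * B\<^sup>2) + d"
    by (simp only: dual_loss_def snd_conv Gfun_treat_eq[of f lam, folded h_def] expand d_def) simp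
  moreover have "dual_loss M n s2 B (f, lam0) = X / (4 * s2) + (lam 1)\<^sup>2 / (4 * real n * B\<^sup>2)"
    by (simp add: dual_loss_def Gfun_def lam0_def X_def)
  ultimately have "(2 * Y + Z) / (4 * s2) \<le> - d"
    by (simp add: add_divide_distrib)
  then have "Z \<le> - 2 * Y + 4 * s2 * (- d)"
    using s2 by (simp add: pos_divide_le_eq algebra_simps)
  also have "\<dots> \<le> 2 * (F * (5 * E * R)) + 4 * s2 * (2 * R / real n)"
  proof -
    have "- (lam 2 - lam 3) \<le> 2 * R"
      using abs_le_norm_rest[of 2 lam] abs_le_norm_rest[of 3 lam] by (simp add: R_def)
    then have "- d \<le> 2 * R / real n"
      unfolding d_def minus_divide_left by (rule divide_right_mono) simp
    then have "4 * s2 * (- d) \<le> 4 * s2 * (2 * R / real n)"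
      using s2 by (intro mult_left_mono) auto
    moreover have "- 2 * Y \<le> 2 * (F * (5 * E * R))" using fh_le unfolding Y_def by linarith
    ultimately show ?thesis by linarith
  qed
  also have "\<dots> = (10 * E * F + 8 * s2 / real n) * R" by (simp add: algebra_simps)
  finally show ?thesis unfolding Z_def M_def h_def R_def E_def F_def .
qed

lemma minimizer_norm_rest_le:
  fixes p :: "real \<Rightarrow> real"
  assumes rd: "rd_design l p" and s2: "s2 > 0" and n: "n \<ge> 1"
    and mn: "is_minimizer (density lborel p) l n s2 B (f, lam)"
    and r: "0 < r" "r \<le> 1" and q: "0 < q" and q_le: "\<And>x. \<bar>x\<bar> \<le> r \<Longrightarrow> q \<le> p x"
  shows "norm_rest lam \<le> (10 * (1 + l + l^2) + 8 * s2) / (q * (r^5/400)) * (lam 1 * l^3 + 1 / real n)"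
proof -
  define R where "R = norm_rest lam"
  define c where "c = q * (r^5/400)"
  define E where "E = 1 + l + l^2"
  define F where "F = lam 1 * l^3"
  define W where "W = 10 * E * F + 8 * s2 / real n"
  have l: "l > 0" using rd by (simp add: rd_design_def)
  have F0: "0 \<le> F"
    using Theta_snd_1_nonneg[of "(f, lam)" l] mn l by (simp add: F_def is_minimizer_def)
  have E0: "0 \<le> E" using l by (simp add: E_def)
  have c0: "0 < c" using q r by (simp add: c_def)
  have R0: "0 \<le> R" unfolding R_def by (rule norm_rest_nonneg)
  have int: "integrable (density lborel p) (\<lambda>x. (quadratic_part lam x)\<^sup>2)"
    using quadratic_part_abs_le by (intro rd_design_integrable_square[OF rd]) auto
  have p: "p \<in> borel_measurable borel" "\<And>x. 0 \<le> p x" using rd by (auto simp: rd_design_def)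
  have "c * R\<^sup>2 \<le> W * R"
    using quadratic_part_energy_ge[OF p int r less_imp_le[OF q] q_le]
      minimizer_quadratic_part_energy_le[OF rd s2 n mn]
    unfolding c_def R_def W_def E_def F_def by linarith
  then have "c * R \<le> W"
  proof (cases "R = 0")
    case True
    then show ?thesis using E0 F0 s2 by (simp add: W_def)
  qed (use R0 in \<open>simp add: power2_eq_square\<close>)
  then have "R \<le> W / c"
    using c0 by (simp add: pos_le_divide_eq mult.commute)
  also have "\<dots> \<le> (10 * E + 8 * s2) * (F + 1 / real n) / c"
  proof (rule divide_right_mono)
    have "0 \<le> 10 * E / real n + 8 * s2 * F" using E0 F0 s2 by simp
    then show "W \<le> (10 * E + 8 * s2) * (F + 1 / real n)"
      unfolding W_def by (simp add: algebra_simps)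
  qed (use c0 in simp)
  also have "\<dots> = (10 * E + 8 * s2) / c * (F + 1 / real n)" by simp
  finally show ?thesis unfolding R_def c_def E_def F_def .
qed

lemma isCont_half_lower_bound:
  fixes p :: "real \<Rightarrow> real"
  assumes "isCont p 0" "p 0 > 0"
  obtains r where "0 < r" "r \<le> 1" "\<And>x. \<bar>x\<bar> \<le> r \<Longrightarrow> p 0 / 2 \<le> p x"
proof -
  obtain d where d: "d > 0" "\<And>x. dist x 0 < d \<Longrightarrow> dist (p x) (p 0) < p 0 / 2"
    using assms unfolding continuous_at_eps_delta by (meson half_gt_zero)
  show ?thesis
  proof (rule that[of "min (d/2) 1"])
    fix x :: real assume "\<bar>x\<bar> \<le> min (d/2) 1"
    then have "dist (p x) (p 0) < p 0 / 2" using d by (intro d(2)) (simp add: dist_real_def)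
    then show "p 0 / 2 \<le> p x" unfolding dist_real_def by linarith
  qed (use d in auto)
qed

lemma dual_loss_diff_B:
  "dual_loss M n s2 Bh \<theta> - dual_loss M n s2 B \<theta>
     = (snd \<theta> 1)\<^sup>2 / (4 * real n * Bh\<^sup>2) - (snd \<theta> 1)\<^sup>2 / (4 * real n * B\<^sup>2)"
  by (simp add: dual_loss_def)

lemma penalty_diff_le:
  fixes L Ls Bh B e0 :: real and n :: nat
  assumes "0 \<le> L" "L \<le> 2 * Ls" "B > 0" "e0 > 0" "Bh \<ge> e0" "n \<ge> 1"
  shows "\<bar>L\<^sup>2 / (4 * real n * Bh\<^sup>2) - L\<^sup>2 / (4 * real n * B\<^sup>2)\<bar>
          \<le> (1/e0 + 1/B) * (Ls\<^sup>2 / real n) * \<bar>1 / Bh - 1 / B\<bar>"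
proof -
  define u where "u = 1 / Bh"
  define v where "v = 1 / B"
  have u: "0 < u" "u \<le> 1/e0" using assms unfolding u_def by (auto simp: frac_le)
  have v: "0 < v" using assms unfolding v_def by simp
  have L2: "L\<^sup>2 \<le> 4 * Ls\<^sup>2"
    using power_mono[OF assms(2,1), of 2] by (simp add: power_mult_distrib)
  have "L\<^sup>2 / (4 * real n * Bh\<^sup>2) - L\<^sup>2 / (4 * real n * B\<^sup>2) = L\<^sup>2 / (4 * real n) * ((u - v) * (u + v))"
    unfolding u_def v_def using assms by (simp add: field_simps power2_eq_square)
  then have "\<bar>L\<^sup>2 / (4 * real n * Bh\<^sup>2) - L\<^sup>2 / (4 * real n * B\<^sup>2)\<bar>
      = L\<^sup>2 / (4 * real n) * (\<bar>u - v\<bar> * (u + v))"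
    using u v by (simp add: abs_mult)
  also have "\<dots> \<le> (4 * Ls\<^sup>2) / (4 * real n) * (\<bar>u - v\<bar> * (1/e0 + v))"
    using u v L2 by (intro mult_mono divide_right_mono) auto
  also have "\<dots> = (1/e0 + 1/B) * (Ls\<^sup>2 / real n) * \<bar>1 / Bh - 1 / B\<bar>"
    unfolding u_def v_def by (simp add: field_simps)
  finally show ?thesis .
qed

lemma dual_loss_perturb_B_le:
  assumes \<delta>: "\<delta> < 1" and B: "B > 0" and e0: "e0 > 0" and Bh: "Bh \<ge> e0" and n: "n \<ge> 1"
    and mn: "is_minimizer M l n s2 B \<theta>s" and near: "\<theta> \<in> Theta_n l \<delta> \<epsilon> (snd \<theta>s)"
  shows "\<bar>dual_loss M n s2 Bh \<theta> - dual_loss M n s2 B \<theta>\<bar>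
           \<le> (1/e0 + 1/B) * ((snd \<theta>s 1)\<^sup>2 / real n) * \<bar>1 / Bh - 1 / B\<bar>"
proof -
  have th: "\<theta> \<in> Theta l" and close: "\<bar>snd \<theta> 1 - snd \<theta>s 1\<bar> \<le> \<delta> * snd \<theta>s 1"
    using near unfolding Theta_n_def by auto
  have "0 \<le> snd \<theta>s 1" using mn Theta_snd_1_nonneg[of \<theta>s l] by (simp add: is_minimizer_def)
  then have "\<delta> * snd \<theta>s 1 \<le> snd \<theta>s 1" using mult_right_mono[of \<delta> 1] \<delta> by simp
  then have "snd \<theta> 1 \<le> 2 * snd \<theta>s 1" using close by linarith
  then show ?thesis unfolding dual_loss_diff_B
    by (rule penalty_diff_le[OF Theta_snd_1_nonneg[OF th] _ B e0 Bh n])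
qed

theorem lemma5:
  shows "(\<forall>l p s2 B (\<theta>s :: nat \<Rightarrow> dual_param).
            rd_design l p \<longrightarrow> s2 > 0 \<longrightarrow> B > 0 \<longrightarrow>
            (\<forall>n\<ge>1. is_minimizer (density lborel p) l n s2 B (\<theta>s n)) \<longrightarrow>
            (\<exists>K N. \<forall>n\<ge>N. norm_rest (snd (\<theta>s n)) \<le> K * (snd (\<theta>s n) 1 * l ^ 3 + 1 / real n)))
       \<and> (\<forall>\<delta> B \<epsilon>0. 0 < \<delta> \<longrightarrow> \<delta> < 1 \<longrightarrow> B > 0 \<longrightarrow> \<epsilon>0 > 0 \<longrightarrow>
            (\<exists>C. \<forall>\<epsilon> l p n s2h Bh \<theta>s. 0 < \<epsilon> \<longrightarrow> \<epsilon> < 1 \<longrightarrow> rd_design l p \<longrightarrow>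
                n \<ge> 1 \<longrightarrow> s2h > 0 \<longrightarrow> Bh \<ge> \<epsilon>0 \<longrightarrow>
                is_minimizer (density lborel p) l n s2h B \<theta>s \<longrightarrow>
                (\<forall>\<theta>\<in>Theta_n l \<delta> \<epsilon> (snd \<theta>s).
                   \<bar>dual_loss (density lborel p) n s2h Bh \<theta> - dual_loss (density lborel p) n s2h B \<theta>\<bar>
                   \<le> C * ((snd \<theta>s 1)\<^sup>2 / real n) * \<bar>1 / Bh - 1 / B\<bar>)))"
proof (intro conjI allI impI)
  fix l p s2 B and \<theta>s :: "nat \<Rightarrow> dual_param"
  assume rd: "rd_design l p" and s2: "s2 > 0"
    and mn: "\<forall>n\<ge>1. is_minimizer (density lborel p) l n s2 B (\<theta>s n)"
  have p0: "isCont p 0" "p 0 > 0" using rd unfolding rd_design_def by auto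
  obtain r where r: "0 < r" "r \<le> 1" "\<And>x. \<bar>x\<bar> \<le> r \<Longrightarrow> p 0 / 2 \<le> p x"
    using isCont_half_lower_bound[OF p0] by blast
  have "norm_rest (snd (\<theta>s n))
      \<le> (10 * (1 + l + l^2) + 8 * s2) / (p 0 / 2 * (r^5/400)) * (snd (\<theta>s n) 1 * l^3 + 1 / real n)"
    if n: "n \<ge> 1" for n
  proof -
    have "is_minimizer (density lborel p) l n s2 B (fst (\<theta>s n), snd (\<theta>s n))"
      using mn n by simp
    from minimizer_norm_rest_le[OF rd s2 n this r(1,2) _ r(3)] p0(2) show ?thesis by simp
  qed
  then show "\<exists>K N. \<forall>n\<ge>N. norm_rest (snd (\<theta>s n)) \<le> K * (snd (\<theta>s n) 1 * l ^ 3 + 1 / real n)"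
    by blast
qed (rule exI, intro allI impI ballI, rule dual_loss_perturb_B_le, assumption+)

end
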